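(* Assume $\mathcal M$ satisfies extensibility. Let $\lambda\in\mathbb R^A$, $\lambda>0$, and partition $A$ by equality of $\lambda_i$ into $S_1,\dots,S_d$ with $\lambda(S_1)<\dots<\lambda(S_d)$. Let $R\subseteq S_d$, let $\hat X$ be an optimal solution of $LP(\lambda)$ that is jointly optimal for $R$, and let $(\hat\alpha,\hat p)$ be an optimal solution of $DLP(\lambda)$. For $a>0$ let $\lambda'=\lambda+a\mathbf 1_R$. Then $\hat X$ is optimal for $LP(\lambda')$, and there exists an optimal solution $(\alpha',p')$ of $DLP(\lambda')$ such that: $p'_j\ge\hat p_j$ for all $j\in G$; $p'_j=\hat p_j$ for every $j$ with $\sum_{i\notin R}\hat x_{ij}>0$; and $\alpha'_{ik}=\hat\alpha_{ik}$ for all $i\notin R$ and all $k\in C$.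
   Context: A market $\mathcal M$: finite agent set $A$, finite goods set $G$ (supply $1$ each), finite index set $C$; agent $i$ has real coefficients $a_{ijk}$, requirements $r_{ik}\ge0$, delays $d_{ij}\ge0$. CC$(i)$: $\sum_ja_{ijk}x_{ij}\ge r_{ik}$ for all $k$, $x_{ij}\ge0$. An allocation $X\ge0$ is supply respecting if $\sum_ix_{ij}\le1$ for all $j$. For $S\subseteq A$, $X$ is jointly optimal for $S$ if it satisfies CC$(i)$ for all $i\in S$, is supply respecting, and minimizes $\sum_{i\in S}\sum_jd_{ij}x_{ij}$ among such allocations. Extensibility: for every $S\subset A$, every $X$ jointly optimal for $S$ and every $i\in A\setminus S$, there is $X'$ jointly optimal for $S\cup\{i\}$ with $\sum_jd_{i'j}x'_{i'j}=\sum_jd_{i'j}x_{i'j}$ for all $i'\in S$. $LP(\lambda)$: minimize $\sum_i\lambda_i\sum_jd_{ij}x_{ij}$ s.t. $\sum_ja_{ijk}x_{ij}\ge r_{ik}$ for all $(i,k)$, $\sum_ix_{ij}\le1$ for all $j$, $x\ge0$. $DLP(\lambda)$: maximize $\sum_{i,k}r_{ik}\alpha_{ik}-\sum_jp_j$ s.t. $\lambda_id_{ij}\ge\sum_ka_{ijk}\alpha_{ik}-p_j$ for all $(i,j)$, $\alpha,p\ge0$. $\lambda(S)$ is the common value of $\lambda_i$ on $S$; $\mathbf 1_R\in\{0,1\}^A$ is the indicator vector of $R$. *)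

theory Defs
  imports Main "HOL.Real"
begin

text \<open>Allocations are functions X :: agent => good => real (only values on A x G matter).\<close>

definition market :: "'a set \<Rightarrow> 'g set \<Rightarrow> 'c set \<Rightarrow> ('a \<Rightarrow> 'g \<Rightarrow> 'c \<Rightarrow> real)
   \<Rightarrow> ('a \<Rightarrow> 'c \<Rightarrow> real) \<Rightarrow> ('a \<Rightarrow> 'g \<Rightarrow> real) \<Rightarrow> bool" where
  "market A G C a r d \<longleftrightarrow> finite A \<and> finite G \<and> finite C \<and>
     (\<forall>i\<in>A. \<forall>k\<in>C. r i k \<ge> 0) \<and> (\<forall>i\<in>A. \<forall>j\<in>G. d i j \<ge> 0)"

definition CC :: "'g set \<Rightarrow> 'c set \<Rightarrow> ('a \<Rightarrow> 'g \<Rightarrow> 'c \<Rightarrow> real) \<Rightarrow> ('a \<Rightarrow> 'c \<Rightarrow> real)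
   \<Rightarrow> 'a \<Rightarrow> ('a \<Rightarrow> 'g \<Rightarrow> real) \<Rightarrow> bool" where
  "CC G C a r i X \<longleftrightarrow> (\<forall>k\<in>C. (\<Sum>j\<in>G. a i j k * X i j) \<ge> r i k) \<and> (\<forall>j\<in>G. X i j \<ge> 0)"

definition supply_respecting :: "'a set \<Rightarrow> 'g set \<Rightarrow> ('a \<Rightarrow> 'g \<Rightarrow> real) \<Rightarrow> bool" where
  "supply_respecting A G X \<longleftrightarrow> (\<forall>i\<in>A. \<forall>j\<in>G. X i j \<ge> 0) \<and> (\<forall>j\<in>G. (\<Sum>i\<in>A. X i j) \<le> 1)"

definition cost :: "'g set \<Rightarrow> ('a \<Rightarrow> 'g \<Rightarrow> real) \<Rightarrow> ('a \<Rightarrow> 'g \<Rightarrow> real) \<Rightarrow> 'a \<Rightarrow> real" where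
  "cost G d X i = (\<Sum>j\<in>G. d i j * X i j)"

definition feasible_for :: "'a set \<Rightarrow> 'g set \<Rightarrow> 'c set \<Rightarrow> ('a \<Rightarrow> 'g \<Rightarrow> 'c \<Rightarrow> real)
   \<Rightarrow> ('a \<Rightarrow> 'c \<Rightarrow> real) \<Rightarrow> 'a set \<Rightarrow> ('a \<Rightarrow> 'g \<Rightarrow> real) \<Rightarrow> bool" where
  "feasible_for A G C a r S X \<longleftrightarrow> (\<forall>i\<in>S. CC G C a r i X) \<and> supply_respecting A G X"

definition jointly_optimal :: "'a set \<Rightarrow> 'g set \<Rightarrow> 'c set \<Rightarrow> ('a \<Rightarrow> 'g \<Rightarrow> 'c \<Rightarrow> real)
   \<Rightarrow> ('a \<Rightarrow> 'c \<Rightarrow> real) \<Rightarrow> ('a \<Rightarrow> 'g \<Rightarrow> real) \<Rightarrow> 'a set \<Rightarrow> ('a \<Rightarrow> 'g \<Rightarrow> real) \<Rightarrow> bool" where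
  "jointly_optimal A G C a r d S X \<longleftrightarrow> feasible_for A G C a r S X \<and>
     (\<forall>Y. feasible_for A G C a r S Y \<longrightarrow> (\<Sum>i\<in>S. cost G d X i) \<le> (\<Sum>i\<in>S. cost G d Y i))"

definition extensible :: "'a set \<Rightarrow> 'g set \<Rightarrow> 'c set \<Rightarrow> ('a \<Rightarrow> 'g \<Rightarrow> 'c \<Rightarrow> real)
   \<Rightarrow> ('a \<Rightarrow> 'c \<Rightarrow> real) \<Rightarrow> ('a \<Rightarrow> 'g \<Rightarrow> real) \<Rightarrow> bool" where
  "extensible A G C a r d \<longleftrightarrow>
     (\<forall>S X i. S \<subset> A \<longrightarrow> jointly_optimal A G C a r d S X \<longrightarrow> i \<in> A - S \<longrightarrow>
        (\<exists>X'. jointly_optimal A G C a r d (insert i S) X' \<and>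
              (\<forall>i'\<in>S. cost G d X' i' = cost G d X i')))"

definition LP_obj :: "'a set \<Rightarrow> 'g set \<Rightarrow> ('a \<Rightarrow> 'g \<Rightarrow> real) \<Rightarrow> ('a \<Rightarrow> real)
   \<Rightarrow> ('a \<Rightarrow> 'g \<Rightarrow> real) \<Rightarrow> real" where
  "LP_obj A G d lam X = (\<Sum>i\<in>A. lam i * cost G d X i)"

definition LP_optimal :: "'a set \<Rightarrow> 'g set \<Rightarrow> 'c set \<Rightarrow> ('a \<Rightarrow> 'g \<Rightarrow> 'c \<Rightarrow> real)
   \<Rightarrow> ('a \<Rightarrow> 'c \<Rightarrow> real) \<Rightarrow> ('a \<Rightarrow> 'g \<Rightarrow> real) \<Rightarrow> ('a \<Rightarrow> real) \<Rightarrow> ('a \<Rightarrow> 'g \<Rightarrow> real) \<Rightarrow> bool" where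
  "LP_optimal A G C a r d lam X \<longleftrightarrow> feasible_for A G C a r A X \<and>
     (\<forall>Y. feasible_for A G C a r A Y \<longrightarrow> LP_obj A G d lam X \<le> LP_obj A G d lam Y)"

definition DLP_feasible :: "'a set \<Rightarrow> 'g set \<Rightarrow> 'c set \<Rightarrow> ('a \<Rightarrow> 'g \<Rightarrow> 'c \<Rightarrow> real)
   \<Rightarrow> ('a \<Rightarrow> 'g \<Rightarrow> real) \<Rightarrow> ('a \<Rightarrow> real) \<Rightarrow> ('a \<Rightarrow> 'c \<Rightarrow> real) \<Rightarrow> ('g \<Rightarrow> real) \<Rightarrow> bool" where
  "DLP_feasible A G C a d lam \<alpha> p \<longleftrightarrow>
     (\<forall>i\<in>A. \<forall>j\<in>G. lam i * d i j \<ge> (\<Sum>k\<in>C. a i j k * \<alpha> i k) - p j) \<and>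
     (\<forall>i\<in>A. \<forall>k\<in>C. \<alpha> i k \<ge> 0) \<and> (\<forall>j\<in>G. p j \<ge> 0)"

definition DLP_obj :: "'a set \<Rightarrow> 'g set \<Rightarrow> 'c set \<Rightarrow> ('a \<Rightarrow> 'c \<Rightarrow> real)
   \<Rightarrow> ('a \<Rightarrow> 'c \<Rightarrow> real) \<Rightarrow> ('g \<Rightarrow> real) \<Rightarrow> real" where
  "DLP_obj A G C r \<alpha> p = (\<Sum>i\<in>A. \<Sum>k\<in>C. r i k * \<alpha> i k) - (\<Sum>j\<in>G. p j)"

definition DLP_optimal :: "'a set \<Rightarrow> 'g set \<Rightarrow> 'c set \<Rightarrow> ('a \<Rightarrow> 'g \<Rightarrow> 'c \<Rightarrow> real)
   \<Rightarrow> ('a \<Rightarrow> 'c \<Rightarrow> real) \<Rightarrow> ('a \<Rightarrow> 'g \<Rightarrow> real) \<Rightarrow> ('a \<Rightarrow> real)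
   \<Rightarrow> ('a \<Rightarrow> 'c \<Rightarrow> real) \<Rightarrow> ('g \<Rightarrow> real) \<Rightarrow> bool" where
  "DLP_optimal A G C a r d lam \<alpha> p \<longleftrightarrow> DLP_feasible A G C a d lam \<alpha> p \<and>
     (\<forall>\<beta> q. DLP_feasible A G C a d lam \<beta> q \<longrightarrow> DLP_obj A G C r \<beta> q \<le> DLP_obj A G C r \<alpha> p)"

end

theory Submission
  imports Defs
begin

text \<open>Since \<open>Xh\<close> minimises both the \<open>lam\<close>-weighted cost and the joint cost of \<open>R\<close>, it
  minimises their sum, the \<open>lam'\<close>-weighted cost. For the dual, let \<open>H\<close> be the goods left untouched
  by the agents outside \<open>R\<close>, and consider the LP of the agents in \<open>R\<close> alone, with costs
  \<open>(lam i + \<epsilon>) * d i j + ph j\<close> and supply constraints only on \<open>H\<close>. Weak duality against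
  \<open>(\<alpha>h, ph)\<close> and the joint optimality of \<open>Xh\<close> for \<open>R\<close> (which survives dropping the supply
  constraints on goods where the other agents leave slack) bound its value below by the
  \<open>R\<close>-part of the dual objective plus \<open>\<epsilon>\<close> times the joint cost of \<open>R\<close> under \<open>Xh\<close>. An optimal dual
  \<open>(\<beta>, q)\<close> of this LP, used for the agents of \<open>R\<close> together with the prices \<open>ph + q\<close> (\<open>q = 0\<close> off \<open>H\<close>),
  is then feasible for \<open>DLP(lam')\<close> and attains the value of \<open>Xh\<close> in \<open>LP(lam')\<close>, hence is optimal.
  LP duality is derived from Farkas' lemma, proved by Fourier--Motzkin elimination.\<close>

section \<open>Farkas' lemma and LP duality\<close>

definition in_cone :: "'i set \<Rightarrow> 'k set \<Rightarrow> ('k \<Rightarrow> 'i \<Rightarrow> real) \<Rightarrow> ('i \<Rightarrow> real) \<Rightarrow> bool" where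
  "in_cone I K A b \<longleftrightarrow> (\<exists>\<mu>. (\<forall>k\<in>K. 0 \<le> \<mu> k) \<and> (\<forall>i\<in>I. b i = (\<Sum>k\<in>K. \<mu> k * A k i)))"

lemma in_cone_subset:
  assumes "finite K'" "K \<subseteq> K'" "in_cone I K A b"
  shows "in_cone I K' A b"
proof -
  obtain \<mu> where \<mu>: "\<forall>k\<in>K. 0 \<le> \<mu> k" "\<forall>i\<in>I. b i = (\<Sum>k\<in>K. \<mu> k * A k i)"
    using assms(3) unfolding in_cone_def by blast
  define \<nu> where "\<nu> k = (if k \<in> K then \<mu> k else 0)" for k
  have "(\<Sum>k\<in>K'. \<nu> k * A k i) = (\<Sum>k\<in>K. \<mu> k * A k i)" for i
  proof -
    have "(\<Sum>k\<in>K'. \<nu> k * A k i) = (\<Sum>k\<in>K. \<nu> k * A k i)"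
      by (rule sum.mono_neutral_right[OF assms(1,2)]) (auto simp: \<nu>_def)
    then show ?thesis by (simp add: \<nu>_def)
  qed
  then show ?thesis
    unfolding in_cone_def using \<mu> by (intro exI[of _ \<nu>]) (auto simp: \<nu>_def)
qed

text \<open>The Fourier--Motzkin step: the generators and \<open>b\<close> are combined with \<open>A m\<close> so that their
  \<open>y\<close>-components vanish, and a conic representation of the combined \<open>b\<close> lifts to one of \<open>b\<close>.\<close>

lemma in_cone_projection:
  fixes y :: "'i \<Rightarrow> real"
  assumes K: "finite K" "m \<notin> K"
    and yK: "\<forall>k\<in>K. 0 \<le> (\<Sum>i\<in>I. y i * A k i)"
    and yb: "(\<Sum>i\<in>I. y i * b i) < 0"
    and ym: "(\<Sum>i\<in>I. y i * A m i) < 0"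
    and proj: "in_cone I K (\<lambda>k i. (\<Sum>i\<in>I. y i * A k i) * A m i - (\<Sum>i\<in>I. y i * A m i) * A k i)
                 (\<lambda>i. (\<Sum>i\<in>I. y i * b i) * A m i - (\<Sum>i\<in>I. y i * A m i) * b i)"
  shows "in_cone I (insert m K) A b"
proof -
  define t where "t = (\<Sum>i\<in>I. y i * A m i)"
  obtain \<mu> where \<mu>: "\<forall>k\<in>K. 0 \<le> \<mu> k"
    and eq: "\<forall>i\<in>I. (\<Sum>i\<in>I. y i * b i) * A m i - t * b i
               = (\<Sum>k\<in>K. \<mu> k * ((\<Sum>i\<in>I. y i * A k i) * A m i - t * A k i))"
    using proj unfolding in_cone_def t_def by blast
  define s where "s = (\<Sum>k\<in>K. \<mu> k * (\<Sum>i\<in>I. y i * A k i))"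
  have "0 \<le> s" unfolding s_def using \<mu> yK by (intro sum_nonneg) auto
  define \<nu> where "\<nu> = \<mu>(m := (s - (\<Sum>i\<in>I. y i * b i)) / - t)"
  have "\<forall>k\<in>insert m K. 0 \<le> \<nu> k"
    using \<mu> \<open>0 \<le> s\<close> ym yb unfolding \<nu>_def t_def by (auto intro!: divide_nonneg_neg)
  moreover have "b i = (\<Sum>k\<in>insert m K. \<nu> k * A k i)" if i: "i \<in> I" for i
  proof -
    have "(\<Sum>i\<in>I. y i * b i) * A m i - t * b i = s * A m i - t * (\<Sum>k\<in>K. \<mu> k * A k i)"
      using eq i unfolding s_def
      by (simp add: sum_distrib_left sum_distrib_right sum_subtractf algebra_simps)
    moreover have "(\<Sum>k\<in>insert m K. \<nu> k * A k i)
        = (s - (\<Sum>i\<in>I. y i * b i)) / - t * A m i + (\<Sum>k\<in>K. \<mu> k * A k i)"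
      using K unfolding \<nu>_def by (auto intro!: sum.cong)
    ultimately show ?thesis using ym unfolding t_def by (simp add: field_simps)
  qed
  ultimately show ?thesis unfolding in_cone_def by blast
qed

lemma farkas:
  fixes A :: "'k \<Rightarrow> 'i \<Rightarrow> real"
  assumes "finite I" "finite K" "\<not> in_cone I K A b"
  shows "\<exists>y. (\<forall>k\<in>K. 0 \<le> (\<Sum>i\<in>I. y i * A k i)) \<and> (\<Sum>i\<in>I. y i * b i) < 0"
  using assms(2,3)
proof (induction K arbitrary: A b rule: finite_induct)
  case empty
  then obtain i where i: "i \<in> I" "b i \<noteq> 0" unfolding in_cone_def by auto
  have "0 < (\<Sum>i\<in>I. b i * b i)"
    using i by (intro sum_pos2[OF assms(1) i(1)]) (auto simp: zero_less_mult_iff linorder_neq_iff)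
  then show ?case by (intro exI[of _ "\<lambda>i. - b i"]) (simp add: sum_negf)
next
  case (insert m K)
  have "\<not> in_cone I K A b"
    using insert.hyps insert.prems in_cone_subset[of "insert m K" K] by blast
  then obtain y where yK: "\<forall>k\<in>K. 0 \<le> (\<Sum>i\<in>I. y i * A k i)" and yb: "(\<Sum>i\<in>I. y i * b i) < 0"
    using insert.IH by blast
  show ?case
  proof (cases "0 \<le> (\<Sum>i\<in>I. y i * A m i)")
    case True
    then show ?thesis using yK yb by auto
  next
    case False
    define t where "t = (\<Sum>i\<in>I. y i * A m i)"
    define A' where "A' k i = (\<Sum>i\<in>I. y i * A k i) * A m i - t * A k i" for k i
    define b' where "b' i = (\<Sum>i\<in>I. y i * b i) * A m i - t * b i" for i
    have "\<not> in_cone I K A' b'"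
      using in_cone_projection[OF insert.hyps yK yb] False insert.prems
      unfolding A'_def b'_def t_def by force
    then obtain y' where y'K: "\<forall>k\<in>K. 0 \<le> (\<Sum>i\<in>I. y' i * A' k i)"
      and y'b: "(\<Sum>i\<in>I. y' i * b' i) < 0"
      using insert.IH by blast
    define z where "z i = (\<Sum>i\<in>I. y' i * A m i) * y i - t * y' i" for i
    have z_lin: "(\<Sum>i\<in>I. z i * v i)
        = (\<Sum>i\<in>I. y' i * A m i) * (\<Sum>i\<in>I. y i * v i) - t * (\<Sum>i\<in>I. y' i * v i)" for v
      unfolding z_def by (simp add: left_diff_distrib sum_subtractf sum_distrib_left mult.assoc)
    have y'_lin: "(\<Sum>i\<in>I. y' i * (c * u i - t * v i))
        = c * (\<Sum>i\<in>I. y' i * u i) - t * (\<Sum>i\<in>I. y' i * v i)" for c u v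
      by (simp add: right_diff_distrib sum_subtractf sum_distrib_left mult.left_commute)
    have "(\<Sum>i\<in>I. z i * A k i) = (\<Sum>i\<in>I. y' i * A' k i)" for k
      unfolding z_lin A'_def y'_lin by simp
    moreover have "(\<Sum>i\<in>I. z i * b i) = (\<Sum>i\<in>I. y' i * b' i)"
      unfolding z_lin b'_def y'_lin by simp
    moreover have "(\<Sum>i\<in>I. z i * A m i) = 0"
      unfolding z_lin t_def by simp
    ultimately show ?thesis using y'K y'b by (intro exI[of _ z]) auto
  qed
qed

lemma farkas_nonneg:
  fixes A :: "'k \<Rightarrow> 'i \<Rightarrow> real"
  assumes fin: "finite I" "finite K"
    and infeasible: "\<not> (\<exists>\<mu>. (\<forall>k\<in>K. 0 \<le> \<mu> k) \<and> (\<forall>i\<in>I. (\<Sum>k\<in>K. \<mu> k * A k i) \<le> b i))"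
  shows "\<exists>z. (\<forall>i\<in>I. 0 \<le> z i) \<and> (\<forall>k\<in>K. 0 \<le> (\<Sum>i\<in>I. z i * A k i)) \<and> (\<Sum>i\<in>I. z i * b i) < 0"
proof -
  define A' where "A' \<kappa> i = (case \<kappa> of Inl k \<Rightarrow> A k i | Inr i' \<Rightarrow> if i = i' then 1 else 0)"
    for \<kappa> :: "'k + 'i" and i
  txt \<open>The unit vectors \<open>A' (Inr i)\<close> are slack generators turning the inequalities into equations.\<close>
  have sum_A': "(\<Sum>\<kappa>\<in>K <+> I. \<mu> \<kappa> * A' \<kappa> i) = (\<Sum>k\<in>K. \<mu> (Inl k) * A k i) + \<mu> (Inr i)"
    if "i \<in> I" for \<mu> i
    using fin that by (simp add: sum.Plus A'_def if_distrib cong: if_cong)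
  have "\<not> in_cone I (K <+> I) A' b"
  proof
    assume "in_cone I (K <+> I) A' b"
    then obtain \<mu> where \<mu>: "\<forall>\<kappa>\<in>K <+> I. 0 \<le> \<mu> \<kappa>"
      and b: "\<forall>i\<in>I. b i = (\<Sum>\<kappa>\<in>K <+> I. \<mu> \<kappa> * A' \<kappa> i)"
      unfolding in_cone_def by blast
    have "(\<Sum>k\<in>K. \<mu> (Inl k) * A k i) \<le> b i" if "i \<in> I" for i
    proof -
      have "b i = (\<Sum>\<kappa>\<in>K <+> I. \<mu> \<kappa> * A' \<kappa> i)" using b that by blast
      also have "\<dots> = (\<Sum>k\<in>K. \<mu> (Inl k) * A k i) + \<mu> (Inr i)" by (rule sum_A'[OF that])
      finally have "b i = (\<Sum>k\<in>K. \<mu> (Inl k) * A k i) + \<mu> (Inr i)" .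
      moreover have "0 \<le> \<mu> (Inr i)" by (rule bspec[OF \<mu> InrI[OF that]])
      ultimately show ?thesis by linarith
    qed
    moreover have "\<forall>k\<in>K. 0 \<le> \<mu> (Inl k)" using bspec[OF \<mu> InlI] by blast
    ultimately have "\<exists>\<mu>'. (\<forall>k\<in>K. 0 \<le> \<mu>' k) \<and> (\<forall>i\<in>I. (\<Sum>k\<in>K. \<mu>' k * A k i) \<le> b i)"
      by (intro exI[of _ "\<lambda>k. \<mu> (Inl k)"]) blast
    with infeasible show False by blast
  qed
  then obtain z where z: "\<forall>\<kappa>\<in>K <+> I. 0 \<le> (\<Sum>i\<in>I. z i * A' \<kappa> i)" "(\<Sum>i\<in>I. z i * b i) < 0"
    using farkas[OF fin(1) finite_Plus[OF fin(2,1)]] by blast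
  have "(\<Sum>i\<in>I. z i * A' (Inr i') i) = z i'" if "i' \<in> I" for i'
    using fin that by (simp add: A'_def if_distrib cong: if_cong)
  then show ?thesis using z by (intro exI[of _ z]) (force simp: A'_def)
qed

lemma lp_bound_homogeneous:
  fixes M :: "'p \<Rightarrow> 'j \<Rightarrow> real"
  assumes \<xi>: "\<forall>\<rho>\<in>P. b \<rho> \<le> (\<Sum>j\<in>J. M \<rho> j * \<xi> j)" "\<forall>j\<in>J. 0 \<le> \<xi> j"
    and bound: "\<forall>x. (\<forall>\<rho>\<in>P. b \<rho> \<le> (\<Sum>j\<in>J. M \<rho> j * x j)) \<longrightarrow> (\<forall>j\<in>J. 0 \<le> x j)
                  \<longrightarrow> v \<le> (\<Sum>j\<in>J. c j * x j)"
    and x: "\<forall>\<rho>\<in>P. s * b \<rho> \<le> (\<Sum>j\<in>J. M \<rho> j * x j)" "\<forall>j\<in>J. 0 \<le> x j" and "0 \<le> s"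
  shows "s * v \<le> (\<Sum>j\<in>J. c j * x j)"
proof (cases "s = 0")
  case False
  with \<open>0 \<le> s\<close> have "0 < s" by simp
  have "\<forall>\<rho>\<in>P. b \<rho> \<le> (\<Sum>j\<in>J. M \<rho> j * (x j / s))"
    using x(1) \<open>0 < s\<close> by (simp add: sum_divide_distrib[symmetric] pos_le_divide_eq mult.commute)
  moreover have "\<forall>j\<in>J. 0 \<le> x j / s" using x(2) \<open>0 < s\<close> by simp
  ultimately have "v \<le> (\<Sum>j\<in>J. c j * (x j / s))" using bound[rule_format, of "\<lambda>j. x j / s"] by blast
  then show ?thesis
    using \<open>0 < s\<close> by (simp add: sum_divide_distrib[symmetric] pos_le_divide_eq mult.commute)
next
  case True
  txt \<open>Then \<open>x\<close> is a recession direction of the feasible region, so \<open>c \<bullet> x < 0\<close>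
    would make the objective unbounded below along the ray \<open>\<xi> + t x\<close>.\<close>
  have ray: "v \<le> (\<Sum>j\<in>J. c j * \<xi> j) + t * (\<Sum>j\<in>J. c j * x j)" if "0 \<le> t" for t
  proof -
    have lin: "(\<Sum>j\<in>J. f j * (\<xi> j + t * x j)) = (\<Sum>j\<in>J. f j * \<xi> j) + t * (\<Sum>j\<in>J. f j * x j)" for f
      by (simp add: distrib_left sum.distrib sum_distrib_left mult.left_commute)
    have "\<forall>\<rho>\<in>P. b \<rho> \<le> (\<Sum>j\<in>J. M \<rho> j * (\<xi> j + t * x j))"
      using \<xi>(1) x(1) True \<open>0 \<le> t\<close> unfolding lin by (simp add: add_increasing2)
    moreover have "\<forall>j\<in>J. 0 \<le> \<xi> j + t * x j" using \<xi>(2) x(2) \<open>0 \<le> t\<close> by simp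
    ultimately show ?thesis using bound[rule_format, of "\<lambda>j. \<xi> j + t * x j"] unfolding lin by blast
  qed
  show ?thesis
  proof (rule ccontr)
    assume "\<not> ?thesis"
    then have neg: "(\<Sum>j\<in>J. c j * x j) < 0" using True by simp
    define t where "t = ((\<Sum>j\<in>J. c j * \<xi> j) - v + 1) / - (\<Sum>j\<in>J. c j * x j)"
    have "0 \<le> t" unfolding t_def using ray[of 0] neg by (simp add: divide_nonneg_neg)
    moreover have "t * (\<Sum>j\<in>J. c j * x j) = v - (\<Sum>j\<in>J. c j * \<xi> j) - 1"
      unfolding t_def using neg by (simp add: field_simps)
    ultimately show False using ray by fastforce
  qed
qed

theorem lp_duality:
  fixes M :: "'p \<Rightarrow> 'j \<Rightarrow> real"
  assumes fin: "finite J" "finite P"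
    and \<xi>: "\<forall>\<rho>\<in>P. b \<rho> \<le> (\<Sum>j\<in>J. M \<rho> j * \<xi> j)" "\<forall>j\<in>J. 0 \<le> \<xi> j"
    and bound: "\<forall>x. (\<forall>\<rho>\<in>P. b \<rho> \<le> (\<Sum>j\<in>J. M \<rho> j * x j)) \<longrightarrow> (\<forall>j\<in>J. 0 \<le> x j)
                  \<longrightarrow> v \<le> (\<Sum>j\<in>J. c j * x j)"
  shows "\<exists>y. (\<forall>\<rho>\<in>P. 0 \<le> y \<rho>) \<and> (\<forall>j\<in>J. (\<Sum>\<rho>\<in>P. y \<rho> * M \<rho> j) \<le> c j)
           \<and> v \<le> (\<Sum>\<rho>\<in>P. y \<rho> * b \<rho>)"
proof (rule ccontr)
  assume no_dual: "\<not> ?thesis"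
  txt \<open>The dual constraints, with the objective bound as the extra coordinate \<open>None\<close>.\<close>
  define I where "I = insert None (Some ` J)"
  define A where "A \<rho> i = (case i of None \<Rightarrow> - b \<rho> | Some j \<Rightarrow> M \<rho> j)" for \<rho> i
  define rhs where "rhs i = (case i of None \<Rightarrow> - v | Some j \<Rightarrow> c j)" for i
  have sum_I: "(\<Sum>i\<in>I. f i) = f None + (\<Sum>j\<in>J. f (Some j))" for f :: "'j option \<Rightarrow> real"
    unfolding I_def using fin by (simp add: sum.reindex)
  have "\<not> (\<exists>y. (\<forall>\<rho>\<in>P. 0 \<le> y \<rho>) \<and> (\<forall>i\<in>I. (\<Sum>\<rho>\<in>P. y \<rho> * A \<rho> i) \<le> rhs i))"
    using no_dual by (auto simp: I_def A_def rhs_def sum_negf)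
  then obtain z where z: "\<forall>i\<in>I. 0 \<le> z i" "\<forall>\<rho>\<in>P. 0 \<le> (\<Sum>i\<in>I. z i * A \<rho> i)"
      "(\<Sum>i\<in>I. z i * rhs i) < 0"
    using farkas_nonneg[of I P A rhs] fin unfolding I_def by blast
  have "z None * v \<le> (\<Sum>j\<in>J. c j * z (Some j))"
  proof (rule lp_bound_homogeneous[OF \<xi> bound])
    show "\<forall>\<rho>\<in>P. z None * b \<rho> \<le> (\<Sum>j\<in>J. M \<rho> j * z (Some j))"
      using z(2) by (simp add: sum_I A_def mult.commute)
    show "\<forall>j\<in>J. 0 \<le> z (Some j)" "0 \<le> z None" using z(1) by (auto simp: I_def)
  qed
  with z(3) show False by (simp add: sum_I rhs_def mult.commute)
qed

section \<open>Duality for market LPs\<close>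

text \<open>The partial market LP as an instance of \<open>lp_duality\<close>: the variables are the pairs \<open>(i, j)\<close>,
  the rows are the covering constraints \<open>(i, k)\<close> of the agents and the supply constraints of
  the goods in \<open>H\<close>, the latter negated to fit the \<open>\<ge>\<close> form.\<close>

definition market_lp_matrix :: "('a \<Rightarrow> 'g \<Rightarrow> 'c \<Rightarrow> real) \<Rightarrow> ('a \<times> 'c) + 'g \<Rightarrow> 'a \<times> 'g \<Rightarrow> real" where
  "market_lp_matrix a \<rho> p = (case \<rho> of
      Inl (i, k) \<Rightarrow> if fst p = i then a i (snd p) k else 0
    | Inr h \<Rightarrow> if snd p = h then -1 else 0)"

definition market_lp_rhs :: "('a \<Rightarrow> 'c \<Rightarrow> real) \<Rightarrow> ('a \<times> 'c) + 'g \<Rightarrow> real" where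
  "market_lp_rhs r \<rho> = (case \<rho> of Inl (i, k) \<Rightarrow> r i k | Inr h \<Rightarrow> -1)"

lemma market_lp_sums:
  assumes fin: "finite S" "finite G" "finite C" and "H \<subseteq> G"
  shows "i \<in> S \<Longrightarrow> (\<Sum>p\<in>S \<times> G. market_lp_matrix a (Inl (i, k)) p * X p) = (\<Sum>j\<in>G. a i j k * X (i, j))"
    and "h \<in> H \<Longrightarrow> (\<Sum>p\<in>S \<times> G. market_lp_matrix a (Inr h) p * X p) = - (\<Sum>i\<in>S. X (i, h))"
    and "i \<in> S \<Longrightarrow> (\<Sum>\<rho>\<in>(S \<times> C) <+> H. y \<rho> * market_lp_matrix a \<rho> (i, j))
           = (\<Sum>k\<in>C. a i j k * y (Inl (i, k))) - (if j \<in> H then y (Inr j) else 0)"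
    and "(\<Sum>\<rho>\<in>(S \<times> C) <+> H. y \<rho> * market_lp_rhs r \<rho>)
           = (\<Sum>i\<in>S. \<Sum>k\<in>C. r i k * y (Inl (i, k))) - (\<Sum>j\<in>H. y (Inr j))"
proof -
  have "finite H" using \<open>H \<subseteq> G\<close> fin(2) by (rule finite_subset)
  have if_mult: "(if P then x else 0) * z = (if P then x * z else 0)"
    and mult_if: "z * (if P then x else 0) = (if P then z * x else 0)" for P and x z :: real
    by simp_all
  have sum_if: "(\<Sum>x\<in>U. if P then f x else 0) = (if P then sum f U else 0)" for P U and f :: "_ \<Rightarrow> real"
    by simp
  show "i \<in> S \<Longrightarrow> (\<Sum>p\<in>S \<times> G. market_lp_matrix a (Inl (i, k)) p * X p) = (\<Sum>j\<in>G. a i j k * X (i, j))"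
    using fin by (simp add: market_lp_matrix_def sum.cartesian_product' if_mult sum_if cong: if_cong)
  show "h \<in> H \<Longrightarrow> (\<Sum>p\<in>S \<times> G. market_lp_matrix a (Inr h) p * X p) = - (\<Sum>i\<in>S. X (i, h))"
    using fin \<open>H \<subseteq> G\<close>
    by (auto simp: market_lp_matrix_def sum.cartesian_product' if_mult sum_if sum_negf cong: if_cong)
  show "i \<in> S \<Longrightarrow> (\<Sum>\<rho>\<in>(S \<times> C) <+> H. y \<rho> * market_lp_matrix a \<rho> (i, j))
      = (\<Sum>k\<in>C. a i j k * y (Inl (i, k))) - (if j \<in> H then y (Inr j) else 0)"
    using fin \<open>finite H\<close> by (simp add: market_lp_matrix_def sum.Plus sum.cartesian_product' mult_if sum_if
        mult.commute cong: if_cong)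
  show "(\<Sum>\<rho>\<in>(S \<times> C) <+> H. y \<rho> * market_lp_rhs r \<rho>)
      = (\<Sum>i\<in>S. \<Sum>k\<in>C. r i k * y (Inl (i, k))) - (\<Sum>j\<in>H. y (Inr j))"
    using fin \<open>finite H\<close> by (simp add: market_lp_rhs_def sum.Plus sum.cartesian_product' sum_negf mult.commute)
qed

lemma market_lp_duality:
  fixes a :: "'a \<Rightarrow> 'g \<Rightarrow> 'c \<Rightarrow> real" and r :: "'a \<Rightarrow> 'c \<Rightarrow> real" and cc :: "'a \<Rightarrow> 'g \<Rightarrow> real"
  assumes fin: "finite S" "finite G" "finite C" and "H \<subseteq> G"
    and feasible: "\<forall>i\<in>S. \<forall>k\<in>C. r i k \<le> (\<Sum>j\<in>G. a i j k * \<xi> i j)" "\<forall>i\<in>S. \<forall>j\<in>G. 0 \<le> \<xi> i j"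
      "\<forall>j\<in>H. (\<Sum>i\<in>S. \<xi> i j) \<le> 1"
    and bound: "\<forall>x. (\<forall>i\<in>S. \<forall>k\<in>C. r i k \<le> (\<Sum>j\<in>G. a i j k * x i j)) \<longrightarrow> (\<forall>i\<in>S. \<forall>j\<in>G. 0 \<le> x i j)
      \<longrightarrow> (\<forall>j\<in>H. (\<Sum>i\<in>S. x i j) \<le> 1) \<longrightarrow> v \<le> (\<Sum>i\<in>S. \<Sum>j\<in>G. cc i j * x i j)"
  shows "\<exists>\<alpha> q. (\<forall>i\<in>S. \<forall>k\<in>C. 0 \<le> \<alpha> i k) \<and> (\<forall>j\<in>H. 0 \<le> q j) \<and>
     (\<forall>i\<in>S. \<forall>j\<in>G. (\<Sum>k\<in>C. a i j k * \<alpha> i k) - (if j \<in> H then q j else 0) \<le> cc i j) \<and>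
     v \<le> (\<Sum>i\<in>S. \<Sum>k\<in>C. r i k * \<alpha> i k) - (\<Sum>j\<in>H. q j)"
proof -
  have finH: "finite H" using \<open>H \<subseteq> G\<close> fin(2) by (rule finite_subset)
  note sums = market_lp_sums[OF fin \<open>H \<subseteq> G\<close>]
  have Ball_Plus: "(\<forall>\<rho>\<in>U <+> V. P \<rho>) \<longleftrightarrow> (\<forall>u\<in>U. P (Inl u)) \<and> (\<forall>v\<in>V. P (Inr v))" for U V P
    by auto
  have rows_iff: "(\<forall>\<rho>\<in>(S \<times> C) <+> H. market_lp_rhs r \<rho> \<le> (\<Sum>p\<in>S \<times> G. market_lp_matrix a \<rho> p * X p))
      \<longleftrightarrow> (\<forall>i\<in>S. \<forall>k\<in>C. r i k \<le> (\<Sum>j\<in>G. a i j k * X (i, j))) \<and> (\<forall>j\<in>H. (\<Sum>i\<in>S. X (i, j)) \<le> 1)"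
    for X
    by (auto simp: Ball_Plus market_lp_rhs_def sums)
  have "\<exists>y. (\<forall>\<rho>\<in>(S \<times> C) <+> H. 0 \<le> y \<rho>)
      \<and> (\<forall>p\<in>S \<times> G. (\<Sum>\<rho>\<in>(S \<times> C) <+> H. y \<rho> * market_lp_matrix a \<rho> p) \<le> (case p of (i, j) \<Rightarrow> cc i j))
      \<and> v \<le> (\<Sum>\<rho>\<in>(S \<times> C) <+> H. y \<rho> * market_lp_rhs r \<rho>)"
  proof (rule lp_duality[where \<xi> = "\<lambda>(i, j). \<xi> i j"])
    show "\<forall>x. (\<forall>\<rho>\<in>(S \<times> C) <+> H. market_lp_rhs r \<rho> \<le> (\<Sum>p\<in>S \<times> G. market_lp_matrix a \<rho> p * x p))
        \<longrightarrow> (\<forall>p\<in>S \<times> G. 0 \<le> x p) \<longrightarrow> v \<le> (\<Sum>p\<in>S \<times> G. (case p of (i, j) \<Rightarrow> cc i j) * x p)"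
    proof (intro allI impI)
      fix X :: "'a \<times> 'g \<Rightarrow> real"
      assume "\<forall>\<rho>\<in>(S \<times> C) <+> H. market_lp_rhs r \<rho> \<le> (\<Sum>p\<in>S \<times> G. market_lp_matrix a \<rho> p * X p)"
        and "\<forall>p\<in>S \<times> G. 0 \<le> X p"
      then have "v \<le> (\<Sum>i\<in>S. \<Sum>j\<in>G. cc i j * X (i, j))"
        using bound[rule_format, of "\<lambda>i j. X (i, j)"] by (simp add: rows_iff)
      then show "v \<le> (\<Sum>p\<in>S \<times> G. (case p of (i, j) \<Rightarrow> cc i j) * X p)"
        by (simp add: sum.cartesian_product')
    qed
  qed (use fin finH feasible in \<open>auto simp: rows_iff\<close>)
  then obtain y where "\<forall>\<rho>\<in>(S \<times> C) <+> H. 0 \<le> y \<rho>"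
      "\<forall>i\<in>S. \<forall>j\<in>G. (\<Sum>\<rho>\<in>(S \<times> C) <+> H. y \<rho> * market_lp_matrix a \<rho> (i, j)) \<le> cc i j"
      "v \<le> (\<Sum>\<rho>\<in>(S \<times> C) <+> H. y \<rho> * market_lp_rhs r \<rho>)"
    by auto
  then show ?thesis
    by (intro exI[of _ "\<lambda>i k. y (Inl (i, k))"] exI[of _ "\<lambda>j. y (Inr j)"]) (auto simp: sums)
qed

lemma covering_weak_duality:
  fixes a :: "'g \<Rightarrow> 'c \<Rightarrow> real"
  assumes "\<forall>k\<in>C. r k \<le> (\<Sum>j\<in>G. a j k * x j)" "\<forall>j\<in>G. 0 \<le> x j"
    and "\<forall>k\<in>C. 0 \<le> \<beta> k" "\<forall>j\<in>G. (\<Sum>k\<in>C. a j k * \<beta> k) \<le> u j"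
  shows "(\<Sum>k\<in>C. r k * \<beta> k) \<le> (\<Sum>j\<in>G. u j * x j)"
proof -
  have "(\<Sum>k\<in>C. r k * \<beta> k) \<le> (\<Sum>k\<in>C. (\<Sum>j\<in>G. a j k * x j) * \<beta> k)"
    using assms(1,3) by (intro sum_mono mult_right_mono) auto
  also have "\<dots> = (\<Sum>j\<in>G. (\<Sum>k\<in>C. a j k * \<beta> k) * x j)"
    by (simp add: sum_distrib_right sum_distrib_left sum.swap[of _ C G] algebra_simps)
  also have "\<dots> \<le> (\<Sum>j\<in>G. u j * x j)"
    using assms(2,4) by (intro sum_mono mult_right_mono) auto
  finally show ?thesis .
qed

lemma weak_duality:
  assumes "feasible_for A G C a r A X" "DLP_feasible A G C a d lam \<beta> q"
  shows "DLP_obj A G C r \<beta> q \<le> LP_obj A G d lam X"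
proof -
  have X: "\<forall>i\<in>A. CC G C a r i X" "\<forall>j\<in>G. (\<Sum>i\<in>A. X i j) \<le> 1"
    using assms(1) unfolding feasible_for_def supply_respecting_def by auto
  have \<beta>: "\<forall>i\<in>A. \<forall>k\<in>C. 0 \<le> \<beta> i k" "\<forall>j\<in>G. 0 \<le> q j"
    "\<forall>i\<in>A. \<forall>j\<in>G. (\<Sum>k\<in>C. a i j k * \<beta> i k) \<le> lam i * d i j + q j"
    using assms(2) unfolding DLP_feasible_def by (auto simp: diff_le_eq)
  have "(\<Sum>i\<in>A. \<Sum>k\<in>C. r i k * \<beta> i k) \<le> (\<Sum>i\<in>A. \<Sum>j\<in>G. (lam i * d i j + q j) * X i j)"
    using X(1) \<beta> by (intro sum_mono covering_weak_duality) (auto simp: CC_def)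
  also have "\<dots> = LP_obj A G d lam X + (\<Sum>j\<in>G. q j * (\<Sum>i\<in>A. X i j))"
    unfolding LP_obj_def cost_def
    by (simp add: algebra_simps sum.distrib sum_distrib_left sum.swap[of _ A G])
  also have "\<dots> \<le> LP_obj A G d lam X + (\<Sum>j\<in>G. q j)"
    using \<beta>(2) X(2) by (simp add: sum_mono mult_left_le)
  finally show ?thesis unfolding DLP_obj_def by simp
qed

lemma DLP_optimal_obj_eq:
  assumes mkt: "market A G C a r d"
    and X: "LP_optimal A G C a r d lam X" and dual: "DLP_optimal A G C a r d lam \<alpha> p"
  shows "DLP_obj A G C r \<alpha> p = LP_obj A G d lam X"
proof (rule antisym)
  show "DLP_obj A G C r \<alpha> p \<le> LP_obj A G d lam X"
    using weak_duality X dual unfolding LP_optimal_def DLP_optimal_def by blast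
  have fin: "finite A" "finite G" "finite C" using mkt unfolding market_def by auto
  have feasible_iff: "feasible_for A G C a r A Y \<longleftrightarrow> (\<forall>i\<in>A. \<forall>k\<in>C. r i k \<le> (\<Sum>j\<in>G. a i j k * Y i j))
      \<and> (\<forall>i\<in>A. \<forall>j\<in>G. 0 \<le> Y i j) \<and> (\<forall>j\<in>G. (\<Sum>i\<in>A. Y i j) \<le> 1)" for Y
    unfolding feasible_for_def CC_def supply_respecting_def by auto
  have obj: "LP_obj A G d lam Y = (\<Sum>i\<in>A. \<Sum>j\<in>G. lam i * d i j * Y i j)" for Y
    unfolding LP_obj_def cost_def by (simp add: sum_distrib_left mult.assoc)
  have "\<exists>\<beta> q. (\<forall>i\<in>A. \<forall>k\<in>C. 0 \<le> \<beta> i k) \<and> (\<forall>j\<in>G. 0 \<le> q j) \<and>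
      (\<forall>i\<in>A. \<forall>j\<in>G. (\<Sum>k\<in>C. a i j k * \<beta> i k) - (if j \<in> G then q j else 0) \<le> lam i * d i j) \<and>
      LP_obj A G d lam X \<le> (\<Sum>i\<in>A. \<Sum>k\<in>C. r i k * \<beta> i k) - (\<Sum>j\<in>G. q j)"
    by (rule market_lp_duality[OF fin order_refl]) (use X in \<open>auto simp: LP_optimal_def feasible_iff obj\<close>)
  then obtain \<beta> q where "\<forall>i\<in>A. \<forall>k\<in>C. 0 \<le> \<beta> i k" "\<forall>j\<in>G. 0 \<le> q j"
      "\<forall>i\<in>A. \<forall>j\<in>G. (\<Sum>k\<in>C. a i j k * \<beta> i k) - q j \<le> lam i * d i j"
      "LP_obj A G d lam X \<le> (\<Sum>i\<in>A. \<Sum>k\<in>C. r i k * \<beta> i k) - (\<Sum>j\<in>G. q j)"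
    by auto
  then have "DLP_feasible A G C a d lam \<beta> q" "LP_obj A G d lam X \<le> DLP_obj A G C r \<beta> q"
    unfolding DLP_feasible_def DLP_obj_def by auto
  then show "LP_obj A G d lam X \<le> DLP_obj A G C r \<alpha> p"
    using dual unfolding DLP_optimal_def by fastforce
qed

section \<open>Raising the weights of the agents in \<open>R\<close>\<close>

lemma LP_obj_raise:
  assumes "finite A" "R \<subseteq> A"
  shows "LP_obj A G d (\<lambda>i. lam i + \<epsilon> * (if i \<in> R then 1 else 0)) X
           = LP_obj A G d lam X + \<epsilon> * (\<Sum>i\<in>R. cost G d X i)"
proof -
  have "LP_obj A G d (\<lambda>i. lam i + \<epsilon> * (if i \<in> R then 1 else 0)) X
      = LP_obj A G d lam X + (\<Sum>i\<in>A. if i \<in> R then \<epsilon> * cost G d X i else 0)"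
    unfolding LP_obj_def sum.distrib[symmetric] by (intro sum.cong) (auto simp: algebra_simps)
  also have "(\<Sum>i\<in>A. if i \<in> R then \<epsilon> * cost G d X i else 0) = \<epsilon> * (\<Sum>i\<in>R. cost G d X i)"
    using assms by (simp add: sum.inter_restrict[symmetric] Int_absorb1 sum_distrib_left)
  finally show ?thesis .
qed

lemma LP_optimal_raise:
  assumes "finite A" "R \<subseteq> A" "0 \<le> \<epsilon>"
    and "LP_optimal A G C a r d lam X" "jointly_optimal A G C a r d R X"
  shows "LP_optimal A G C a r d (\<lambda>i. lam i + \<epsilon> * (if i \<in> R then 1 else 0)) X"
  unfolding LP_optimal_def
proof (intro conjI allI impI)
  show "feasible_for A G C a r A X" using assms(4) unfolding LP_optimal_def by blast
  fix Y assume Y: "feasible_for A G C a r A Y"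
  then have "feasible_for A G C a r R Y" using assms(2) unfolding feasible_for_def by blast
  then have "(\<Sum>i\<in>R. cost G d X i) \<le> (\<Sum>i\<in>R. cost G d Y i)"
    using assms(5) unfolding jointly_optimal_def by blast
  moreover have "LP_obj A G d lam X \<le> LP_obj A G d lam Y"
    using assms(4) Y unfolding LP_optimal_def by blast
  ultimately show "LP_obj A G d (\<lambda>i. lam i + \<epsilon> * (if i \<in> R then 1 else 0)) X
      \<le> LP_obj A G d (\<lambda>i. lam i + \<epsilon> * (if i \<in> R then 1 else 0)) Y"
    unfolding LP_obj_raise[OF assms(1,2)] using assms(3) by (simp add: add_mono mult_left_mono)
qed

lemma small_convex_step:
  fixes s x :: "'j \<Rightarrow> real"
  assumes "finite J" "\<forall>j\<in>J. 0 \<le> s j \<and> s j \<le> 1" "\<forall>j\<in>J. s j < 1 \<or> x j \<le> 1"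
  shows "\<exists>t. 0 < t \<and> t \<le> 1 \<and> (\<forall>j\<in>J. (1 - t) * s j + t * x j \<le> 1)"
proof -
  define t where "t = Min (insert 1 ((\<lambda>j. (1 - s j) / (1 + \<bar>x j\<bar>)) ` {j\<in>J. s j < 1}))"
  have fin: "finite (insert 1 ((\<lambda>j. (1 - s j) / (1 + \<bar>x j\<bar>)) ` {j\<in>J. s j < 1}))"
    using assms(1) by simp
  have "0 < t" unfolding t_def using fin by (auto simp: Min_gr_iff)
  moreover have "t \<le> 1" unfolding t_def using fin by (intro Min_le) auto
  moreover have "(1 - t) * s j + t * x j \<le> 1" if j: "j \<in> J" for j
  proof (cases "s j < 1")
    case True
    have "t \<le> (1 - s j) / (1 + \<bar>x j\<bar>)" unfolding t_def using fin j True by (intro Min_le) auto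
    then have "t * (1 + \<bar>x j\<bar>) \<le> 1 - s j" by (simp add: pos_le_divide_eq)
    moreover have "t * (x j - s j) \<le> t * (1 + \<bar>x j\<bar>)"
      using \<open>0 < t\<close> assms(2) j by (intro mult_left_mono) auto
    ultimately show ?thesis by (simp add: algebra_simps)
  next
    case False
    then have "x j \<le> 1" "s j \<le> 1" using assms(2,3) j by auto
    then show ?thesis using \<open>0 < t\<close> \<open>t \<le> 1\<close> convex_bound_le[of "s j" 1 "x j" "1 - t" t] by simp
  qed
  ultimately show ?thesis by blast
qed

lemma sum_convex_combination:
  fixes c x y :: "'j \<Rightarrow> real"
  shows "(\<Sum>j\<in>J. c j * ((1 - t) * x j + t * y j)) = (1 - t) * (\<Sum>j\<in>J. c j * x j) + t * (\<Sum>j\<in>J. c j * y j)"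
  by (simp add: distrib_left sum.distrib sum_distrib_left mult.left_commute)

lemma CC_convex:
  assumes "CC G C a r i X" "CC G C a r i Y" "0 \<le> t" "t \<le> 1"
  shows "CC G C a r i (\<lambda>i j. (1 - t) * X i j + t * Y i j)"
  unfolding CC_def
proof (intro conjI ballI)
  fix k assume "k \<in> C"
  then have "r i k \<le> (\<Sum>j\<in>G. a i j k * X i j)" "r i k \<le> (\<Sum>j\<in>G. a i j k * Y i j)"
    using assms(1,2) unfolding CC_def by auto
  then have "(1 - t) * r i k + t * r i k
      \<le> (1 - t) * (\<Sum>j\<in>G. a i j k * X i j) + t * (\<Sum>j\<in>G. a i j k * Y i j)"
    using assms(3,4) by (intro add_mono mult_left_mono) auto
  then show "r i k \<le> (\<Sum>j\<in>G. a i j k * ((1 - t) * X i j + t * Y i j))"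
    unfolding sum_convex_combination by (simp add: algebra_simps)
next
  fix j assume "j \<in> G"
  then show "0 \<le> (1 - t) * X i j + t * Y i j"
    using assms unfolding CC_def by simp
qed

lemma feasible_for_convex_step:
  assumes "finite A" "R \<subseteq> A" and X: "feasible_for A G C a r R X"
    and x: "\<forall>i\<in>R. CC G C a r i x" and t: "0 \<le> t" "t \<le> 1"
    and within_supply: "\<forall>j\<in>G. (1 - t) * (\<Sum>i\<in>R. X i j) + t * (\<Sum>i\<in>R. x i j) \<le> 1"
  shows "feasible_for A G C a r R (\<lambda>i j. if i \<in> R then (1 - t) * X i j + t * x i j else 0)"
  unfolding feasible_for_def supply_respecting_def
proof (intro conjI ballI)
  fix i assume "i \<in> R"
  then show "CC G C a r i (\<lambda>i j. if i \<in> R then (1 - t) * X i j + t * x i j else 0)"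
    using CC_convex[of G C a r i X x t] X x t unfolding feasible_for_def CC_def by auto
next
  fix i j assume "i \<in> A" "j \<in> G"
  then show "0 \<le> (if i \<in> R then (1 - t) * X i j + t * x i j else 0)"
    using X x t \<open>R \<subseteq> A\<close> unfolding feasible_for_def supply_respecting_def CC_def by auto
next
  fix j assume "j \<in> G"
  have "(\<Sum>i\<in>A. if i \<in> R then (1 - t) * X i j + t * x i j else 0) = (\<Sum>i\<in>R. (1 - t) * X i j + t * x i j)"
    using assms(1,2) by (simp add: sum.inter_restrict[symmetric] Int_absorb1)
  then show "(\<Sum>i\<in>A. if i \<in> R then (1 - t) * X i j + t * x i j else 0) \<le> 1"
    using within_supply \<open>j \<in> G\<close> by (simp add: sum.distrib sum_distrib_left)
qed

text \<open>Joint optimality survives if the supply is only enforced on the goods that no agent outside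
  \<open>R\<close> uses: on every other good those agents leave slack, so a small step from \<open>X\<close> towards \<open>x\<close>
  remains supply respecting.\<close>

lemma jointly_optimal_cost_le:
  assumes fin: "finite A" "finite G" and "R \<subseteq> A"
    and X: "jointly_optimal A G C a r d R X"
    and x: "\<forall>i\<in>R. CC G C a r i x" "\<forall>j\<in>G. (\<Sum>i\<in>A - R. X i j) = 0 \<longrightarrow> (\<Sum>i\<in>R. x i j) \<le> 1"
  shows "(\<Sum>i\<in>R. cost G d X i) \<le> (\<Sum>i\<in>R. cost G d x i)"
proof -
  have X_feasible: "feasible_for A G C a r R X" using X unfolding jointly_optimal_def by blast
  then have X_nonneg: "\<forall>i\<in>A. \<forall>j\<in>G. 0 \<le> X i j" and X_supply: "\<forall>j\<in>G. (\<Sum>i\<in>A. X i j) \<le> 1"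
    unfolding feasible_for_def supply_respecting_def by auto
  have split_A: "(\<Sum>i\<in>A. X i j) = (\<Sum>i\<in>R. X i j) + (\<Sum>i\<in>A - R. X i j)" for j
    using sum.subset_diff[OF \<open>R \<subseteq> A\<close> fin(1)] by (simp add: add.commute)
  have share_bounds: "\<forall>j\<in>G. 0 \<le> (\<Sum>i\<in>R. X i j) \<and> (\<Sum>i\<in>R. X i j) \<le> 1"
    and share_slack: "\<forall>j\<in>G. (\<Sum>i\<in>R. X i j) < 1 \<or> (\<Sum>i\<in>R. x i j) \<le> 1"
  proof (safe)
    fix j assume j: "j \<in> G"
    have "0 \<le> (\<Sum>i\<in>R. X i j)" "0 \<le> (\<Sum>i\<in>A - R. X i j)"
      using X_nonneg j \<open>R \<subseteq> A\<close> by (auto intro!: sum_nonneg)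
    moreover have "(\<Sum>i\<in>A. X i j) \<le> 1" using X_supply j by blast
    ultimately show "0 \<le> (\<Sum>i\<in>R. X i j)" "(\<Sum>i\<in>R. X i j) \<le> 1" using split_A[of j] by auto
    assume "\<not> (\<Sum>i\<in>R. x i j) \<le> 1"
    then have "(\<Sum>i\<in>A - R. X i j) \<noteq> 0" using x(2) j by blast
    with \<open>0 \<le> (\<Sum>i\<in>A - R. X i j)\<close> \<open>(\<Sum>i\<in>A. X i j) \<le> 1\<close> show "(\<Sum>i\<in>R. X i j) < 1"
      using split_A[of j] by linarith
  qed
  obtain t where t: "0 < t" "t \<le> 1"
    and step: "\<forall>j\<in>G. (1 - t) * (\<Sum>i\<in>R. X i j) + t * (\<Sum>i\<in>R. x i j) \<le> 1"
    using small_convex_step[OF fin(2) share_bounds share_slack] by blast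
  define Y where "Y i j = (if i \<in> R then (1 - t) * X i j + t * x i j else 0)" for i j
  have "feasible_for A G C a r R Y"
    unfolding Y_def using feasible_for_convex_step[OF fin(1) \<open>R \<subseteq> A\<close> X_feasible x(1)] t step by simp
  then have "(\<Sum>i\<in>R. cost G d X i) \<le> (\<Sum>i\<in>R. cost G d Y i)"
    using X unfolding jointly_optimal_def by blast
  also have "\<dots> = (1 - t) * (\<Sum>i\<in>R. cost G d X i) + t * (\<Sum>i\<in>R. cost G d x i)"
    unfolding cost_def Y_def by (simp add: sum_convex_combination sum.distrib sum_distrib_left)
  finally show ?thesis using t by (simp add: algebra_simps)
qed

lemma restricted_dual_bound:
  assumes mkt: "market A G C a r d" and "R \<subseteq> A" and "0 \<le> \<epsilon>"
    and joint: "jointly_optimal A G C a r d R X"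
    and dual: "DLP_feasible A G C a d lam \<alpha> p"
  defines "H \<equiv> {j\<in>G. (\<Sum>i\<in>A - R. X i j) = 0}"
  obtains \<beta> q where "\<forall>i\<in>R. \<forall>k\<in>C. 0 \<le> \<beta> i k" "\<forall>j\<in>H. 0 \<le> q j"
    "\<forall>i\<in>R. \<forall>j\<in>G. (\<Sum>k\<in>C. a i j k * \<beta> i k) - (if j \<in> H then q j else 0) \<le> (lam i + \<epsilon>) * d i j + p j"
    "(\<Sum>i\<in>R. \<Sum>k\<in>C. r i k * \<alpha> i k) + \<epsilon> * (\<Sum>i\<in>R. cost G d X i)
       \<le> (\<Sum>i\<in>R. \<Sum>k\<in>C. r i k * \<beta> i k) - (\<Sum>j\<in>H. q j)"
proof -
  have fin: "finite A" "finite G" "finite C" using mkt unfolding market_def by auto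
  have "finite R" using \<open>R \<subseteq> A\<close> fin(1) by (rule finite_subset)
  have X: "\<forall>i\<in>R. CC G C a r i X" "\<forall>i\<in>A. \<forall>j\<in>G. 0 \<le> X i j" "\<forall>j\<in>G. (\<Sum>i\<in>A. X i j) \<le> 1"
    using joint unfolding jointly_optimal_def feasible_for_def supply_respecting_def by auto
  have R_supply: "(\<Sum>i\<in>R. X i j) \<le> 1" if "j \<in> H" for j
    using that X(3) sum.subset_diff[OF \<open>R \<subseteq> A\<close> fin(1), of "\<lambda>i. X i j"] unfolding H_def by auto
  have R_lower_bound: "(\<Sum>i\<in>R. \<Sum>k\<in>C. r i k * \<alpha> i k) + \<epsilon> * (\<Sum>i\<in>R. cost G d X i)
      \<le> (\<Sum>i\<in>R. \<Sum>j\<in>G. ((lam i + \<epsilon>) * d i j + p j) * x i j)"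
    if x: "\<forall>i\<in>R. \<forall>k\<in>C. r i k \<le> (\<Sum>j\<in>G. a i j k * x i j)" "\<forall>i\<in>R. \<forall>j\<in>G. 0 \<le> x i j"
      "\<forall>j\<in>H. (\<Sum>i\<in>R. x i j) \<le> 1" for x
  proof -
    have "(\<Sum>i\<in>R. \<Sum>k\<in>C. r i k * \<alpha> i k) \<le> (\<Sum>i\<in>R. \<Sum>j\<in>G. (lam i * d i j + p j) * x i j)"
      using x(1,2) dual \<open>R \<subseteq> A\<close> unfolding DLP_feasible_def
      by (intro sum_mono covering_weak_duality) (auto simp: diff_le_eq subset_iff)
    moreover have "\<epsilon> * (\<Sum>i\<in>R. cost G d X i) \<le> \<epsilon> * (\<Sum>i\<in>R. cost G d x i)"
      using jointly_optimal_cost_le[OF fin(1,2) \<open>R \<subseteq> A\<close> joint] x \<open>0 \<le> \<epsilon>\<close>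
      unfolding CC_def H_def by (auto intro: mult_left_mono)
    moreover have "(\<Sum>i\<in>R. \<Sum>j\<in>G. ((lam i + \<epsilon>) * d i j + p j) * x i j)
        = (\<Sum>i\<in>R. \<Sum>j\<in>G. (lam i * d i j + p j) * x i j) + \<epsilon> * (\<Sum>i\<in>R. cost G d x i)"
      unfolding cost_def by (simp add: algebra_simps sum.distrib sum_distrib_left)
    ultimately show ?thesis by linarith
  qed
  have "\<exists>\<beta> q. (\<forall>i\<in>R. \<forall>k\<in>C. 0 \<le> \<beta> i k) \<and> (\<forall>j\<in>H. 0 \<le> q j) \<and>
    (\<forall>i\<in>R. \<forall>j\<in>G. (\<Sum>k\<in>C. a i j k * \<beta> i k) - (if j \<in> H then q j else 0) \<le> (lam i + \<epsilon>) * d i j + p j) \<and>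
    (\<Sum>i\<in>R. \<Sum>k\<in>C. r i k * \<alpha> i k) + \<epsilon> * (\<Sum>i\<in>R. cost G d X i)
       \<le> (\<Sum>i\<in>R. \<Sum>k\<in>C. r i k * \<beta> i k) - (\<Sum>j\<in>H. q j)"
    using X R_supply R_lower_bound \<open>R \<subseteq> A\<close>
    by (intro market_lp_duality[OF \<open>finite R\<close> fin(2,3)]) (auto simp: H_def CC_def)
  then show ?thesis using that by blast
qed

lemma DLP_optimal_certificate:
  assumes "feasible_for A G C a r A X" "DLP_feasible A G C a d lam \<alpha> p"
    and "LP_obj A G d lam X \<le> DLP_obj A G C r \<alpha> p"
  shows "DLP_optimal A G C a r d lam \<alpha> p"
  using assms weak_duality[OF assms(1)] unfolding DLP_optimal_def by fastforce

lemma DLP_feasible_raise: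
  assumes "DLP_feasible A G C a d lam \<alpha> p" "\<forall>j\<in>G. 0 \<le> q j"
    and "\<forall>i\<in>R. \<forall>k\<in>C. 0 \<le> \<beta> i k"
    and "\<forall>i\<in>R. \<forall>j\<in>G. (\<Sum>k\<in>C. a i j k * \<beta> i k) - q j \<le> (lam i + \<epsilon>) * d i j + p j"
  shows "DLP_feasible A G C a d (\<lambda>i. lam i + \<epsilon> * (if i \<in> R then 1 else 0))
           (\<lambda>i k. if i \<in> R then \<beta> i k else \<alpha> i k) (\<lambda>j. p j + q j)"
  using assms unfolding DLP_feasible_def by (force simp: algebra_simps)

lemma exists_DLP_optimal_raise:
  assumes mkt: "market A G C a r d" and "R \<subseteq> A" and "0 \<le> \<epsilon>"
    and X: "LP_optimal A G C a r d lam X" and joint: "jointly_optimal A G C a r d R X"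
    and dual: "DLP_optimal A G C a r d lam \<alpha> p"
  shows "\<exists>\<alpha>' p'. DLP_optimal A G C a r d (\<lambda>i. lam i + \<epsilon> * (if i \<in> R then 1 else 0)) \<alpha>' p' \<and>
           (\<forall>j\<in>G. p j \<le> p' j) \<and> (\<forall>j\<in>G. 0 < (\<Sum>i\<in>A - R. X i j) \<longrightarrow> p' j = p j) \<and>
           (\<forall>i\<in>A - R. \<forall>k\<in>C. \<alpha>' i k = \<alpha> i k)"
proof -
  define H where "H = {j\<in>G. (\<Sum>i\<in>A - R. X i j) = 0}"
  have fin: "finite A" "finite G" using mkt unfolding market_def by auto
  have "H \<subseteq> G" unfolding H_def by blast
  obtain \<beta> q where \<beta>: "\<forall>i\<in>R. \<forall>k\<in>C. 0 \<le> \<beta> i k" and q: "\<forall>j\<in>H. 0 \<le> q j"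
    and \<beta>q: "\<forall>i\<in>R. \<forall>j\<in>G. (\<Sum>k\<in>C. a i j k * \<beta> i k) - (if j \<in> H then q j else 0)
                 \<le> (lam i + \<epsilon>) * d i j + p j"
    and gain: "(\<Sum>i\<in>R. \<Sum>k\<in>C. r i k * \<alpha> i k) + \<epsilon> * (\<Sum>i\<in>R. cost G d X i)
       \<le> (\<Sum>i\<in>R. \<Sum>k\<in>C. r i k * \<beta> i k) - (\<Sum>j\<in>H. q j)"
    using restricted_dual_bound[OF mkt \<open>R \<subseteq> A\<close> \<open>0 \<le> \<epsilon>\<close> joint] dual
    unfolding DLP_optimal_def H_def by blast
  define \<alpha>' where "\<alpha>' i k = (if i \<in> R then \<beta> i k else \<alpha> i k)" for i k
  define q' where "q' j = (if j \<in> H then q j else 0)" for j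
  have "DLP_feasible A G C a d (\<lambda>i. lam i + \<epsilon> * (if i \<in> R then 1 else 0)) \<alpha>' (\<lambda>j. p j + q' j)"
    unfolding \<alpha>'_def using DLP_feasible_raise dual \<beta> \<beta>q q unfolding DLP_optimal_def q'_def by fastforce
  moreover have "DLP_obj A G C r \<alpha>' (\<lambda>j. p j + q' j) = DLP_obj A G C r \<alpha> p
      + ((\<Sum>i\<in>R. \<Sum>k\<in>C. r i k * \<beta> i k) - (\<Sum>j\<in>H. q j)) - (\<Sum>i\<in>R. \<Sum>k\<in>C. r i k * \<alpha> i k)"
  proof -
    have "(\<Sum>i\<in>A. f i) = (\<Sum>i\<in>A - R. f i) + (\<Sum>i\<in>R. f i)" for f :: "'a \<Rightarrow> real"
      using sum.subset_diff[OF \<open>R \<subseteq> A\<close> fin(1)] by simp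
    moreover have "(\<Sum>j\<in>G. q' j) = (\<Sum>j\<in>H. q j)"
      using fin(2) \<open>H \<subseteq> G\<close> by (simp add: q'_def sum.inter_restrict[symmetric] Int_absorb1)
    ultimately show ?thesis unfolding DLP_obj_def \<alpha>'_def by (simp add: sum.distrib)
  qed
  moreover have "DLP_obj A G C r \<alpha> p = LP_obj A G d lam X" by (rule DLP_optimal_obj_eq[OF mkt X dual])
  ultimately have "DLP_optimal A G C a r d (\<lambda>i. lam i + \<epsilon> * (if i \<in> R then 1 else 0)) \<alpha>' (\<lambda>j. p j + q' j)"
    using gain X by (intro DLP_optimal_certificate)
      (auto simp: LP_optimal_def LP_obj_raise[OF fin(1) \<open>R \<subseteq> A\<close>])
  moreover have "\<forall>j\<in>G. p j \<le> p j + q' j" using q unfolding q'_def by simp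
  ultimately show ?thesis unfolding q'_def H_def \<alpha>'_def by (intro exI) auto
qed

theorem lemma4p4:
  fixes A :: "'a set" and G :: "'g set" and C :: "'c set"
    and a :: "'a \<Rightarrow> 'g \<Rightarrow> 'c \<Rightarrow> real" and r :: "'a \<Rightarrow> 'c \<Rightarrow> real" and d :: "'a \<Rightarrow> 'g \<Rightarrow> real"
    and lam :: "'a \<Rightarrow> real" and R :: "'a set"
    and Xh :: "'a \<Rightarrow> 'g \<Rightarrow> real" and \<alpha>h :: "'a \<Rightarrow> 'c \<Rightarrow> real" and ph :: "'g \<Rightarrow> real"
    and \<epsilon> :: real
  assumes mkt: "market A G C a r d"
    and ext: "extensible A G C a r d"
    and lam_pos: "\<forall>i\<in>A. lam i > 0"
    and R_top: "R \<subseteq> {i\<in>A. lam i = Max (lam ` A)}"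
    and Xh_opt: "LP_optimal A G C a r d lam Xh"
    and Xh_joint: "jointly_optimal A G C a r d R Xh"
    and dual_opt: "DLP_optimal A G C a r d lam \<alpha>h ph"
    and eps_pos: "\<epsilon> > 0"
  shows "let lam' = (\<lambda>i. lam i + \<epsilon> * (if i \<in> R then 1 else 0)) in
           LP_optimal A G C a r d lam' Xh \<and>
           (\<exists>\<alpha>' p'. DLP_optimal A G C a r d lam' \<alpha>' p' \<and>
              (\<forall>j\<in>G. p' j \<ge> ph j) \<and>
              (\<forall>j\<in>G. (\<Sum>i\<in>A - R. Xh i j) > 0 \<longrightarrow> p' j = ph j) \<and>
              (\<forall>i\<in>A - R. \<forall>k\<in>C. \<alpha>' i k = \<alpha>h i k))"
proof -
  have "finite A" using mkt unfolding market_def by blast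
  have "R \<subseteq> A" using R_top by blast
  have "0 \<le> \<epsilon>" using eps_pos by simp
  show ?thesis
    unfolding Let_def
    using LP_optimal_raise[OF \<open>finite A\<close> \<open>R \<subseteq> A\<close> \<open>0 \<le> \<epsilon>\<close> Xh_opt Xh_joint]
      exists_DLP_optimal_raise[OF mkt \<open>R \<subseteq> A\<close> \<open>0 \<le> \<epsilon>\<close> Xh_opt Xh_joint dual_opt]
    by blast
qed

end
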